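(* If $\Gamma\vdash M:A\mid\Delta$ is derivable in the simply typed $\lambda\mu$-calculus, then $\Gamma^D\vdash M:A^D\mid\Delta^C$ is derivable in the intersection type system, where the translations are as defined in the context.
   Context: $\lambda\mu$-terms: $M,N ::= x \mid \lambda x.M \mid MN \mid \mu\alpha.[\beta]M$ over disjoint denumerable sets of term variables and names ($\lambda$ binds $x$, $\mu$ binds $\alpha$; bound and free variables/names are assumed distinct). Simply typed $\lambda\mu$-calculus. Formulas $A,B ::= \varphi \mid A\to B$ with $\varphi$ ranging over propositional variables. $\Gamma$ maps finitely many term variables to formulas, $\Delta$ finitely many names to formulas. Rules: (ax) $\Gamma,x{:}A\vdash x:A\mid\Delta$; ($\mu_1$) from $\Gamma\vdash M:A\mid\alpha{:}A,\Delta$ infer $\Gamma\vdash\mu\alpha.[\alpha]M:A\mid\Delta$; ($\mu_2$) from $\Gamma\vdash M:B\mid\alpha{:}A,\beta{:}B,\Delta$ infer $\Gamma\vdash\mu\alpha.[\beta]M:A\mid\beta{:}B,\Delta$; ($\to$I) from $\Gamma,x{:}A\vdash M:B\mid\Delta$ infer $\Gamma\vdash\lambda x.M:A\to B\mid\Delta$; ($\to$E) from $\Gamma\vdash M:A\to B\mid\Delta$ and $\Gamma\vdash N:A\mid\Delta$ infer $\Gamma\vdash MN:B\mid\Delta$. Intersection types. With a single type constant $\nu$ and a symbol $\omega$ (not itself a type): $\mathcal{T}_D:\ \delta ::= \nu \mid \omega\to\nu \mid \kappa\to\nu \mid \delta\wedge\delta$; $\mathcal{T}_C:\ \kappa ::=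 \delta\times\omega \mid \delta\times\kappa \mid \kappa\wedge\kappa$ ($\times$ right-associative). $\le$ is the least preorder on $\mathcal{T}_D$ and on $\mathcal{T}_C$ such that: $\sigma\wedge\tau\le\sigma$; $\sigma\wedge\tau\le\tau$; $\nu\le\omega\to\nu$; $\omega\to\nu\le\nu$; $\delta_1\times\delta_2\times\omega\le\delta_1\times\omega$; $(\delta_1\times\omega)\wedge(\delta_2\times\kappa)\le(\delta_1\wedge\delta_2)\times\kappa$; $(\delta_1\times\kappa_1)\wedge(\delta_2\times\kappa_2)\le(\delta_1\wedge\delta_2)\times(\kappa_1\wedge\kappa_2)$; $\delta_1\le\delta_2\Rightarrow\delta_1\times\omega\le\delta_2\times\omega$; $\delta_1\le\delta_2,\kappa_1\le\kappa_2\Rightarrow\delta_1\times\kappa_1\le\delta_2\times\kappa_2$; $\sigma\le\tau_1,\sigma\le\tau_2\Rightarrow\sigma\le\tau_1\wedge\tau_2$; $\kappa_2\le\kappa_1\Rightarrow\kappa_1\to\nu\le\kappa_2\to\nu$. Judgements $\Gamma\vdash M:\delta\mid\Delta$ with $\Gamma$ a finite map from variables to $\mathcal{T}_D$ and $\Delta$ from names to $\mathcal{T}_C$ (variables/names of $\Gamma,\Delta$ not bound in $M$). Rules: (ax) $\Gamma,x{:}\delta\vdash x:\delta\mid\Delta$; (abs) from $\Gamma,x{:}\delta\vdash M:\kappa\to\nu\mid\Delta$ infer $\Gamma\vdash\lambda x.M:\delta\times\kappa\to\nu\mid\Delta$; (app) from $\Gamma\vdash M:\delta\times\kappa\to\nu\mid\Delta$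 and $\Gamma\vdash N:\delta\mid\Delta$ infer $\Gamma\vdash MN:\kappa\to\nu\mid\Delta$ ($\kappa\in\mathcal{T}_C$ or $\kappa=\omega$ in (abs),(app)); ($\mu$) from $\Gamma\vdash M:\kappa'\to\nu\mid\alpha{:}\kappa,\beta{:}\kappa',\Delta$ infer $\Gamma\vdash\mu\alpha.[\beta]M:\kappa\to\nu\mid\beta{:}\kappa',\Delta$ ($\beta\neq\alpha$), and from $\Gamma\vdash M:\kappa\to\nu\mid\alpha{:}\kappa,\Delta$ infer $\Gamma\vdash\mu\alpha.[\alpha]M:\kappa\to\nu\mid\Delta$; ($\le$) from $\Gamma\vdash M:\delta\mid\Delta$, $\delta\le\delta'$ infer $\Gamma\vdash M:\delta'\mid\Delta$; ($\wedge$) from $\Gamma\vdash M:\delta\mid\Delta$ and $\Gamma\vdash M:\delta'\mid\Delta$ infer $\Gamma\vdash M:\delta\wedge\delta'\mid\Delta$. Translation: $\varphi^C=\nu\times\omega$, $(A\to B)^C=(A^C\to\nu)\times B^C$, $A^D=A^C\to\nu$; $\Gamma^D=\{x{:}A^D\mid x{:}A\in\Gamma\}$, $\Delta^C=\{\alpha{:}A^C\mid\alpha{:}A\in\Delta\}$. *)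

theory Defs
  imports Main
begin

datatype ('v, 'n) trm =
    Var 'v
  | Lam 'v "('v, 'n) trm"
  | App "('v, 'n) trm" "('v, 'n) trm"
  | Mu 'n 'n "('v, 'n) trm"   (* Mu \<alpha> \<beta> M  represents  \<mu>\<alpha>.[\<beta>]M *)

datatype 'p sty = Atom 'p | Arr "'p sty" "'p sty"

inductive stype ::
  "('v \<rightharpoonup> 'p sty) \<Rightarrow> ('v, 'n) trm \<Rightarrow> 'p sty \<Rightarrow> ('n \<rightharpoonup> 'p sty) \<Rightarrow> bool"
where
  s_ax:  "\<Gamma> x = Some A \<Longrightarrow> finite (dom \<Gamma>) \<Longrightarrow> finite (dom \<Delta>) \<Longrightarrow>
          stype \<Gamma> (Var x) A \<Delta>"
| s_mu1: "\<alpha> \<notin> dom \<Delta> \<Longrightarrow> stype \<Gamma> M A (\<Delta>(\<alpha> \<mapsto> A)) \<Longrightarrow>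
          stype \<Gamma> (Mu \<alpha> \<alpha> M) A \<Delta>"
| s_mu2: "\<alpha> \<noteq> \<beta> \<Longrightarrow> \<alpha> \<notin> dom \<Delta> \<Longrightarrow> \<Delta> \<beta> = Some B \<Longrightarrow>
          stype \<Gamma> M B (\<Delta>(\<alpha> \<mapsto> A)) \<Longrightarrow>
          stype \<Gamma> (Mu \<alpha> \<beta> M) A \<Delta>"
| s_abs: "x \<notin> dom \<Gamma> \<Longrightarrow> stype (\<Gamma>(x \<mapsto> A)) M B \<Delta> \<Longrightarrow>
          stype \<Gamma> (Lam x M) (Arr A B) \<Delta>"
| s_app: "stype \<Gamma> M (Arr A B) \<Delta> \<Longrightarrow> stype \<Gamma> N A \<Delta> \<Longrightarrow>
          stype \<Gamma> (App M N) B \<Delta>"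

(* T_D and T_C, mutually defined.
   Nu = \<nu>;  OmArr = \<omega>\<rightarrow>\<nu>;  KArr \<kappa> = \<kappa>\<rightarrow>\<nu>;  DAnd = \<and> on T_D;
   TOm \<delta> = \<delta>\<times>\<omega>;  TCons \<delta> \<kappa> = \<delta>\<times>\<kappa>;  CAnd = \<and> on T_C *)
datatype dty = Nu | OmArr | KArr cty | DAnd dty dty
     and cty = TOm dty | TCons dty cty | CAnd cty cty

inductive leD :: "dty \<Rightarrow> dty \<Rightarrow> bool"
      and leC :: "cty \<Rightarrow> cty \<Rightarrow> bool"
where
  leD_refl:  "leD d d"
| leD_trans: "leD d1 d2 \<Longrightarrow> leD d2 d3 \<Longrightarrow> leD d1 d3"
| leC_refl:  "leC k k"
| leC_trans: "leC k1 k2 \<Longrightarrow> leC k2 k3 \<Longrightarrow> leC k1 k3"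
| leD_and1:  "leD (DAnd s t) s"
| leD_and2:  "leD (DAnd s t) t"
| leC_and1:  "leC (CAnd s t) s"
| leC_and2:  "leC (CAnd s t) t"
| leD_nu_om: "leD Nu OmArr"
| leD_om_nu: "leD OmArr Nu"
| leC_drop:  "leC (TCons d1 (TOm d2)) (TOm d1)"
| leC_dist1: "leC (CAnd (TOm d1) (TCons d2 k)) (TCons (DAnd d1 d2) k)"
| leC_dist2: "leC (CAnd (TCons d1 k1) (TCons d2 k2)) (TCons (DAnd d1 d2) (CAnd k1 k2))"
| leC_TOm:   "leD d1 d2 \<Longrightarrow> leC (TOm d1) (TOm d2)"
| leC_TCons: "leD d1 d2 \<Longrightarrow> leC k1 k2 \<Longrightarrow> leC (TCons d1 k1) (TCons d2 k2)"
| leD_glb:   "leD s t1 \<Longrightarrow> leD s t2 \<Longrightarrow> leD s (DAnd t1 t2)"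
| leC_glb:   "leC s t1 \<Longrightarrow> leC s t2 \<Longrightarrow> leC s (CAnd t1 t2)"
| leD_arr:   "leC k2 k1 \<Longrightarrow> leD (KArr k1) (KArr k2)"

inductive itype ::
  "('v \<rightharpoonup> dty) \<Rightarrow> ('v, 'n) trm \<Rightarrow> dty \<Rightarrow> ('n \<rightharpoonup> cty) \<Rightarrow> bool"
where
  i_ax:    "\<Gamma> x = Some d \<Longrightarrow> finite (dom \<Gamma>) \<Longrightarrow> finite (dom \<Delta>) \<Longrightarrow>
            itype \<Gamma> (Var x) d \<Delta>"
  (* (abs) with \<kappa> \<in> T_C, and with \<kappa> = \<omega> *)
| i_abs:   "x \<notin> dom \<Gamma> \<Longrightarrow> itype (\<Gamma>(x \<mapsto> d)) M (KArr k) \<Delta> \<Longrightarrow>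
            itype \<Gamma> (Lam x M) (KArr (TCons d k)) \<Delta>"
| i_abs_om: "x \<notin> dom \<Gamma> \<Longrightarrow> itype (\<Gamma>(x \<mapsto> d)) M OmArr \<Delta> \<Longrightarrow>
            itype \<Gamma> (Lam x M) (KArr (TOm d)) \<Delta>"
  (* (app) with \<kappa> \<in> T_C, and with \<kappa> = \<omega> *)
| i_app:   "itype \<Gamma> M (KArr (TCons d k)) \<Delta> \<Longrightarrow> itype \<Gamma> N d \<Delta> \<Longrightarrow>
            itype \<Gamma> (App M N) (KArr k) \<Delta>"
| i_app_om: "itype \<Gamma> M (KArr (TOm d)) \<Delta> \<Longrightarrow> itype \<Gamma> N d \<Delta> \<Longrightarrow>
            itype \<Gamma> (App M N) OmArr \<Delta>"
| i_mu2:   "\<beta> \<noteq> \<alpha> \<Longrightarrow> \<alpha> \<notin> dom \<Delta> \<Longrightarrow> \<Delta> \<beta> = Some k' \<Longrightarrow>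
            itype \<Gamma> M (KArr k') (\<Delta>(\<alpha> \<mapsto> k)) \<Longrightarrow>
            itype \<Gamma> (Mu \<alpha> \<beta> M) (KArr k) \<Delta>"
| i_mu1:   "\<alpha> \<notin> dom \<Delta> \<Longrightarrow> itype \<Gamma> M (KArr k) (\<Delta>(\<alpha> \<mapsto> k)) \<Longrightarrow>
            itype \<Gamma> (Mu \<alpha> \<alpha> M) (KArr k) \<Delta>"
| i_le:    "itype \<Gamma> M d \<Delta> \<Longrightarrow> leD d d' \<Longrightarrow> itype \<Gamma> M d' \<Delta>"
| i_and:   "itype \<Gamma> M d \<Delta> \<Longrightarrow> itype \<Gamma> M d' \<Delta> \<Longrightarrow> itype \<Gamma> M (DAnd d d') \<Delta>"

fun trC :: "'p sty \<Rightarrow> cty" where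
  "trC (Atom p) = TOm Nu"
| "trC (Arr A B) = TCons (KArr (trC A)) (trC B)"

definition trD :: "'p sty \<Rightarrow> dty" where
  "trD A = KArr (trC A)"

definition trGamma :: "('v \<rightharpoonup> 'p sty) \<Rightarrow> ('v \<rightharpoonup> dty)" where
  "trGamma \<Gamma> = map_option trD \<circ> \<Gamma>"

definition trDelta :: "('n \<rightharpoonup> 'p sty) \<Rightarrow> ('n \<rightharpoonup> cty)" where
  "trDelta \<Delta> = map_option trC \<circ> \<Delta>"

end

theory Submission
  imports Defs
begin

text \<open>Since \<open>(A \<rightarrow> B)\<^sup>D = (A\<^sup>D \<times> B\<^sup>C) \<rightarrow> \<nu>\<close>,
  each simple typing rule becomes an instance of the intersection rule of the same name with
  \<open>\<kappa> \<in> T\<^sub>C\<close>.\<close>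

lemma trD_Arr: "trD (Arr A B) = KArr (TCons (trD A) (trC B))"
  by (simp add: trD_def)

lemma trGamma_Some: "\<Gamma> x = Some A \<Longrightarrow> trGamma \<Gamma> x = Some (trD A)"
  by (simp add: trGamma_def)

lemma trDelta_Some: "\<Delta> \<alpha> = Some A \<Longrightarrow> trDelta \<Delta> \<alpha> = Some (trC A)"
  by (simp add: trDelta_def)

lemma trGamma_upd: "trGamma (\<Gamma>(x \<mapsto> A)) = (trGamma \<Gamma>)(x \<mapsto> trD A)"
  by (auto simp: trGamma_def)

lemma trDelta_upd: "trDelta (\<Delta>(\<alpha> \<mapsto> A)) = (trDelta \<Delta>)(\<alpha> \<mapsto> trC A)"
  by (auto simp: trDelta_def)

lemma dom_trGamma [simp]: "dom (trGamma \<Gamma>) = dom \<Gamma>"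
  by (auto simp: trGamma_def)

lemma dom_trDelta [simp]: "dom (trDelta \<Delta>) = dom \<Delta>"
  by (auto simp: trDelta_def)

lemma itype_tr_Var:
  "\<Gamma> x = Some A \<Longrightarrow> finite (dom \<Gamma>) \<Longrightarrow> finite (dom \<Delta>) \<Longrightarrow>
    itype (trGamma \<Gamma>) (Var x) (trD A) (trDelta \<Delta>)"
  by (intro i_ax) (simp_all add: trGamma_Some)

lemma itype_tr_Mu_self:
  assumes "\<alpha> \<notin> dom \<Delta>" and "itype \<Gamma>' M (trD A) (trDelta (\<Delta>(\<alpha> \<mapsto> A)))"
  shows "itype \<Gamma>' (Mu \<alpha> \<alpha> M) (trD A) (trDelta \<Delta>)"
  using assms unfolding trD_def trDelta_upd by (intro i_mu1) simp_all

lemma itype_tr_Mu: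
  assumes "\<alpha> \<noteq> \<beta>" and "\<alpha> \<notin> dom \<Delta>" and "\<Delta> \<beta> = Some B"
    and "itype \<Gamma>' M (trD B) (trDelta (\<Delta>(\<alpha> \<mapsto> A)))"
  shows "itype \<Gamma>' (Mu \<alpha> \<beta> M) (trD A) (trDelta \<Delta>)"
  using assms unfolding trD_def trDelta_upd by (intro i_mu2) (simp_all add: trDelta_Some)

lemma itype_tr_Lam:
  assumes "x \<notin> dom \<Gamma>" and "itype (trGamma (\<Gamma>(x \<mapsto> A))) M (trD B) \<Delta>'"
  shows "itype (trGamma \<Gamma>) (Lam x M) (trD (Arr A B)) \<Delta>'"
  using assms unfolding trD_Arr trGamma_upd by (intro i_abs) (simp_all add: trD_def)

lemma itype_tr_App:
  assumes "itype \<Gamma>' M (trD (Arr A B)) \<Delta>'" and "itype \<Gamma>' N (trD A) \<Delta>'"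
  shows "itype \<Gamma>' (App M N) (trD B) \<Delta>'"
  using assms unfolding trD_Arr by (simp add: trD_def i_app)

theorem mainTheorem3:
  fixes \<Gamma> :: "'v \<rightharpoonup> 'p sty" and \<Delta> :: "'n \<rightharpoonup> 'p sty" and M :: "('v, 'n) trm"
  assumes "stype \<Gamma> M A \<Delta>"
  shows "itype (trGamma \<Gamma>) M (trD A) (trDelta \<Delta>)"
  using assms
proof (induction rule: stype.induct)
  case s_ax
  then show ?case by (rule itype_tr_Var)
next
  case s_mu1
  then show ?case by (blast intro: itype_tr_Mu_self)
next
  case s_mu2
  then show ?case by (blast intro: itype_tr_Mu)
next
  case s_abs
  then show ?case by (blast intro: itype_tr_Lam)
next
  case s_app
  then show ?case by (blast intro: itype_tr_App)
qed

end
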